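(* There exists a compact metrizable abelian group $K$ having a countable dense subgroup $G$ which, in the subspace topology, is not $g$-reversible.
   Context: All topological groups are assumed Hausdorff. A topological group $G$ is called $g$-reversible if every continuous automorphism of $G$ (i.e. every continuous group isomorphism of $G$ onto itself) is an open map. *)

theory Defs
  imports "HOL-Analysis.Analysis" "HOL-Algebra.Group"
begin

definition topological_group :: "('a, 'b) monoid_scheme \<Rightarrow> 'a topology \<Rightarrow> bool" where
  "topological_group G T \<longleftrightarrow>
     group G \<and> topspace T = carrier G \<and> Hausdorff_space T \<and>
     continuous_map (prod_topology T T) T (\<lambda>(x, y). x \<otimes>\<^bsub>G\<^esub> y) \<and>
     continuous_map T T (\<lambda>x. inv\<^bsub>G\<^esub> x)"

definition g_reversible :: "('a, 'b) monoid_scheme \<Rightarrow> 'a topology \<Rightarrow> bool" where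
  "g_reversible G T \<longleftrightarrow>
     (\<forall>f. f \<in> iso G G \<and> continuous_map T T f \<longrightarrow> open_map T T f)"

end

theory Submission
  imports Defs
begin

text \<open>Take \<open>K = {0, 1}\<^sup>\<nat> \<cong> (\<int>/2)\<^sup>\<nat>\<close> with the product topology and let \<open>H\<close> be the dense
  subgroup of finitely supported sequences. The map \<open>x \<mapsto> x + \<sigma> x\<close>, where \<open>\<sigma>\<close> is the shift,
  is a continuous endomorphism of \<open>K\<close>; its kernel consists of the constant sequences, so it is
  injective on \<open>H\<close>, and summing tails modulo 2 inverts it on \<open>H\<close>. It is not open on \<open>H\<close>:
  the unit sequences \<open>e\<^sub>N\<close> tend to 0, but their preimages in \<open>H\<close>, the indicators of
  \<open>{0..N}\<close>, all lie outside the open set \<open>{x. x 0 = 0}\<close>, whose image therefore contains no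
  neighbourhood of 0.\<close>

lemma openin_product_topology_nat_cylinder:
  fixes X :: "nat \<Rightarrow> 'a topology"
  assumes "openin (product_topology X UNIV) W" "x \<in> W"
  obtains N where
    "\<And>y. y \<in> topspace (product_topology X UNIV) \<Longrightarrow> (\<And>n. n < N \<Longrightarrow> y n = x n) \<Longrightarrow> y \<in> W"
proof -
  obtain U where fin: "finite {i \<in> UNIV. U i \<noteq> topspace (X i)}"
    and x: "x \<in> Pi\<^sub>E UNIV U" and UW: "Pi\<^sub>E UNIV U \<subseteq> W"
    using assms unfolding openin_product_topology_alt by blast
  obtain N where N: "\<And>i. U i \<noteq> topspace (X i) \<Longrightarrow> i < N"
    using fin by (auto simp: finite_nat_set_iff_bounded)
  show thesis
  proof (rule that)
    fix y assume y: "y \<in> topspace (product_topology X UNIV)" and agree: "\<And>n. n < N \<Longrightarrow> y n = x n"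
    have "y i \<in> U i" for i
    proof (cases "i < N")
      case True
      then show ?thesis using agree x by auto
    next
      case False
      then have "U i = topspace (X i)" using N by (meson not_less)
      then show ?thesis using y by (simp add: PiE_iff)
    qed
    then show "y \<in> W" using UW by auto
  qed
qed

definition binary_seqs :: "(nat \<Rightarrow> real) set" where
  "binary_seqs = (\<Pi>\<^sub>E n\<in>UNIV. {0, 1})"

lemma binary_seqs_iff: "x \<in> binary_seqs \<longleftrightarrow> (\<forall>n. x n = 0 \<or> x n = 1)"
  by (auto simp: binary_seqs_def PiE_iff)

lemma binary_seqsD: "x \<in> binary_seqs \<Longrightarrow> x n = 0 \<or> x n = 1"
  by (simp add: binary_seqs_iff)

text \<open>On \<open>{0, 1}\<close>, \<open>(a, b) \<mapsto> \<bar>a - b\<bar>\<close> is addition modulo 2.\<close>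
definition cantor_group :: "(nat \<Rightarrow> real) monoid" where
  "cantor_group = \<lparr>carrier = binary_seqs, mult = (\<lambda>x y n. \<bar>x n - y n\<bar>), one = (\<lambda>_. 0)\<rparr>"

lemma binary_seqs_abs_diff:
  assumes "x \<in> binary_seqs" "y \<in> binary_seqs"
  shows "(\<lambda>n. \<bar>x n - y n\<bar>) \<in> binary_seqs"
proof -
  have "\<bar>x n - y n\<bar> = 0 \<or> \<bar>x n - y n\<bar> = 1" for n
    using binary_seqsD[OF assms(1), of n] binary_seqsD[OF assms(2), of n] by auto
  then show ?thesis by (simp add: binary_seqs_iff)
qed

lemma comm_group_cantor_group: "comm_group cantor_group"
proof (rule comm_groupI)
  fix x y z assume x: "x \<in> carrier cantor_group" and y: "y \<in> carrier cantor_group"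
    and z: "z \<in> carrier cantor_group"
  have "\<bar>\<bar>x n - y n\<bar> - z n\<bar> = \<bar>x n - \<bar>y n - z n\<bar>\<bar>" for n
    using x y z binary_seqsD[of x n] binary_seqsD[of y n] binary_seqsD[of z n]
    by (auto simp: cantor_group_def)
  then show "x \<otimes>\<^bsub>cantor_group\<^esub> y \<otimes>\<^bsub>cantor_group\<^esub> z = x \<otimes>\<^bsub>cantor_group\<^esub> (y \<otimes>\<^bsub>cantor_group\<^esub> z)"
    by (simp add: cantor_group_def)
next
  fix x assume "x \<in> carrier cantor_group"
  then have "\<bar>x n\<bar> = x n" for n
    using binary_seqsD[of x n] by (auto simp: cantor_group_def)
  then show "\<one>\<^bsub>cantor_group\<^esub> \<otimes>\<^bsub>cantor_group\<^esub> x = x"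
    by (simp add: cantor_group_def)
  show "\<exists>y\<in>carrier cantor_group. y \<otimes>\<^bsub>cantor_group\<^esub> x = \<one>\<^bsub>cantor_group\<^esub>"
    using \<open>x \<in> carrier cantor_group\<close> by (auto simp: cantor_group_def intro!: bexI[of _ x])
next
  show "\<one>\<^bsub>cantor_group\<^esub> \<in> carrier cantor_group"
    by (simp add: cantor_group_def binary_seqs_iff)
qed (simp_all add: cantor_group_def binary_seqs_abs_diff abs_minus_commute)

lemma group_cantor_group: "group cantor_group"
  using comm_group_cantor_group by (simp add: comm_group_def)

lemma cantor_group_inv: "x \<in> binary_seqs \<Longrightarrow> inv\<^bsub>cantor_group\<^esub> x = x"
  by (rule group.inv_equality[OF group_cantor_group]) (auto simp: cantor_group_def)

definition cantor_topology :: "(nat \<Rightarrow> real) topology" where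
  "cantor_topology = product_topology (\<lambda>_. top_of_set {0, 1}) UNIV"

lemma topspace_cantor_topology [simp]: "topspace cantor_topology = binary_seqs"
  by (simp add: cantor_topology_def binary_seqs_def)

lemma continuous_map_into_cantor_topology:
  "continuous_map X cantor_topology f \<longleftrightarrow>
     f \<in> topspace X \<rightarrow> binary_seqs \<and> (\<forall>k. continuous_map X euclideanreal (\<lambda>x. f x k))"
  by (auto simp: cantor_topology_def continuous_map_componentwise_UNIV continuous_map_in_subtopology
      binary_seqs_iff image_subset_iff Pi_iff)

lemma continuous_map_cantor_coordinate: "continuous_map cantor_topology euclideanreal (\<lambda>x. x k)"
  using continuous_map_into_cantor_topology[of cantor_topology id] by auto

lemma openin_cantor_topology_cylinder:
  assumes "openin cantor_topology W" "x \<in> W"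
  obtains N where "\<And>y. y \<in> binary_seqs \<Longrightarrow> (\<And>n. n < N \<Longrightarrow> y n = x n) \<Longrightarrow> y \<in> W"
proof -
  obtain N where N: "\<And>y. y \<in> topspace cantor_topology \<Longrightarrow> (\<And>n. n < N \<Longrightarrow> y n = x n) \<Longrightarrow> y \<in> W"
    using assms unfolding cantor_topology_def by (rule openin_product_topology_nat_cylinder) blast
  show thesis
    by (rule that[of N], rule N) simp_all
qed

lemma compact_space_cantor_topology: "compact_space cantor_topology"
  by (simp add: cantor_topology_def compact_space_product_topology compact_space_subtopology
      compactin_euclidean_iff)

lemma metrizable_space_cantor_topology: "metrizable_space cantor_topology"
  by (simp add: cantor_topology_def metrizable_space_product_topology metrizable_space_subtopology
      metrizable_space_euclidean)

lemma topological_group_cantor: "topological_group cantor_group cantor_topology"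
  unfolding topological_group_def
proof (intro conjI)
  show "Hausdorff_space cantor_topology"
    by (simp add: cantor_topology_def Hausdorff_space_product_topology Hausdorff_space_subtopology)
  have "continuous_map (prod_topology cantor_topology cantor_topology) euclideanreal
          (\<lambda>p. \<bar>fst p k - snd p k\<bar>)" for k
    using continuous_map_compose[OF continuous_map_fst continuous_map_cantor_coordinate]
      continuous_map_compose[OF continuous_map_snd continuous_map_cantor_coordinate]
    by (intro continuous_map_real_abs continuous_map_diff) (simp_all add: o_def)
  then show "continuous_map (prod_topology cantor_topology cantor_topology) cantor_topology
      (\<lambda>(x, y). x \<otimes>\<^bsub>cantor_group\<^esub> y)"
    by (auto simp: continuous_map_into_cantor_topology cantor_group_def binary_seqs_abs_diff case_prod_beta)
  show "continuous_map cantor_topology cantor_topology (\<lambda>x. inv\<^bsub>cantor_group\<^esub> x)"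
    by (rule continuous_map_eq[OF continuous_map_id]) (simp add: cantor_group_inv)
  show "group cantor_group" by (rule group_cantor_group)
  show "topspace cantor_topology = carrier cantor_group" by (simp add: cantor_group_def)
qed

definition finite_support_seqs :: "(nat \<Rightarrow> real) set" where
  "finite_support_seqs = {x \<in> binary_seqs. finite {n. x n \<noteq> 0}}"

lemma zero_in_finite_support_seqs: "(\<lambda>_. 0) \<in> finite_support_seqs"
  by (simp add: finite_support_seqs_def binary_seqs_iff)

lemma subgroup_finite_support_seqs: "subgroup finite_support_seqs cantor_group"
proof (rule group.subgroupI[OF group_cantor_group])
  fix x y assume "x \<in> finite_support_seqs" "y \<in> finite_support_seqs"
  moreover have "{n. \<bar>x n - y n\<bar> \<noteq> 0} \<subseteq> {n. x n \<noteq> 0} \<union> {n. y n \<noteq> 0}" by auto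
  ultimately show "x \<otimes>\<^bsub>cantor_group\<^esub> y \<in> finite_support_seqs"
    by (auto simp: finite_support_seqs_def cantor_group_def binary_seqs_abs_diff intro: finite_subset)
next
  fix x assume "x \<in> finite_support_seqs"
  then show "inv\<^bsub>cantor_group\<^esub> x \<in> finite_support_seqs"
    by (simp add: finite_support_seqs_def cantor_group_inv)
qed (use zero_in_finite_support_seqs in \<open>auto simp: finite_support_seqs_def cantor_group_def\<close>)

lemma countable_finite_support_seqs: "countable finite_support_seqs"
proof (rule countable_image_inj_on)
  let ?supp = "\<lambda>x :: nat \<Rightarrow> real. {n. x n \<noteq> 0}"
  show "countable (?supp ` finite_support_seqs)"
    by (rule countable_subset[OF _ countable_Collect_finite]) (auto simp: finite_support_seqs_def)
  show "inj_on ?supp finite_support_seqs"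
  proof (rule inj_onI)
    fix x y assume x: "x \<in> finite_support_seqs" and y: "y \<in> finite_support_seqs"
      and supp: "?supp x = ?supp y"
    show "x = y"
    proof
      fix n
      have "x n \<noteq> 0 \<longleftrightarrow> y n \<noteq> 0" using supp by blast
      then show "x n = y n"
        using x y binary_seqsD[of x n] binary_seqsD[of y n] by (auto simp: finite_support_seqs_def)
    qed
  qed
qed

lemma dense_finite_support_seqs: "cantor_topology closure_of finite_support_seqs = binary_seqs"
proof -
  have "x \<in> cantor_topology closure_of finite_support_seqs" if x: "x \<in> binary_seqs" for x
  proof (subst in_closure_of, intro conjI allI impI)
    show "x \<in> topspace cantor_topology" using x by simp
    fix W assume "x \<in> W \<and> openin cantor_topology W"
    then obtain N where N: "\<And>y. y \<in> binary_seqs \<Longrightarrow> (\<And>n. n < N \<Longrightarrow> y n = x n) \<Longrightarrow> y \<in> W"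
      using openin_cantor_topology_cylinder by blast
    define y where "y n = (if n < N then x n else 0)" for n
    have "y \<in> binary_seqs" using x by (auto simp: y_def binary_seqs_iff)
    moreover have "finite {n. y n \<noteq> 0}"
      by (rule finite_subset[of _ "{..<N}"]) (auto simp: y_def)
    ultimately show "\<exists>y. y \<in> finite_support_seqs \<and> y \<in> W"
      using N by (auto simp: finite_support_seqs_def y_def)
  qed
  then show ?thesis
    using closure_of_subset_topspace[of cantor_topology finite_support_seqs] by auto
qed

definition successive_diff :: "(nat \<Rightarrow> real) \<Rightarrow> nat \<Rightarrow> real" where
  "successive_diff x n = \<bar>x n - x (Suc n)\<bar>"

lemma successive_diff_binary_seqs: "x \<in> binary_seqs \<Longrightarrow> successive_diff x \<in> binary_seqs"
  unfolding successive_diff_def by (rule binary_seqs_abs_diff) (auto simp: binary_seqs_iff)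

lemma successive_diff_finite_support_seqs:
  assumes "x \<in> finite_support_seqs"
  shows "successive_diff x \<in> finite_support_seqs"
proof -
  have "{n. successive_diff x n \<noteq> 0} \<subseteq> {n. x n \<noteq> 0} \<union> (\<lambda>n. n - 1) ` {n. x n \<noteq> 0}"
    by (force simp: successive_diff_def)
  then show ?thesis
    using assms by (auto simp: finite_support_seqs_def successive_diff_binary_seqs intro: finite_subset)
qed

lemma successive_diff_mult:
  assumes "x \<in> binary_seqs" "y \<in> binary_seqs"
  shows "successive_diff (\<lambda>n. \<bar>x n - y n\<bar>) = (\<lambda>n. \<bar>successive_diff x n - successive_diff y n\<bar>)"
proof
  fix n
  show "successive_diff (\<lambda>n. \<bar>x n - y n\<bar>) n = \<bar>successive_diff x n - successive_diff y n\<bar>"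
    using binary_seqsD[OF assms(1), of n] binary_seqsD[OF assms(1), of "Suc n"]
      binary_seqsD[OF assms(2), of n] binary_seqsD[OF assms(2), of "Suc n"]
    by (auto simp: successive_diff_def)
qed

lemma successive_diff_eq_zero:
  assumes x: "x \<in> finite_support_seqs" and diff: "successive_diff x = (\<lambda>_. 0)"
  shows "x = (\<lambda>_. 0)"
proof -
  have const: "x n = x 0" for n
    using diff by (induction n) (auto simp: successive_diff_def fun_eq_iff)
  obtain m where "x m = 0"
    using x ex_new_if_finite[OF infinite_UNIV_nat] by (auto simp: finite_support_seqs_def)
  then show ?thesis using const by (metis ext)
qed

lemma inj_on_successive_diff: "inj_on successive_diff finite_support_seqs"
proof (rule inj_onI)
  fix x y assume x: "x \<in> finite_support_seqs" and y: "y \<in> finite_support_seqs"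
    and eq: "successive_diff x = successive_diff y"
  let ?z = "\<lambda>n. \<bar>x n - y n\<bar>"
  have "?z \<in> finite_support_seqs"
    using x y subgroup.m_closed[OF subgroup_finite_support_seqs] by (simp add: cantor_group_def)
  moreover have "successive_diff ?z = (\<lambda>_. 0)"
    using x y eq by (simp add: finite_support_seqs_def successive_diff_mult)
  ultimately have "?z = (\<lambda>_. 0)" by (rule successive_diff_eq_zero)
  then show "x = y" by (simp add: fun_eq_iff)
qed

lemma successive_diff_surj_on: "finite_support_seqs \<subseteq> successive_diff ` finite_support_seqs"
proof
  fix y assume y: "y \<in> finite_support_seqs"
  define tail where "tail n = {j. n \<le> j \<and> y j \<noteq> 0}" for n
  define x where "x n = (if even (card (tail n)) then 0 else 1 :: real)" for n
  obtain N where N: "\<And>j. y j \<noteq> 0 \<Longrightarrow> j < N"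
    using y by (auto simp: finite_support_seqs_def finite_nat_set_iff_bounded)
  have "{n. x n \<noteq> 0} \<subseteq> {..<N}"
  proof
    fix n assume "n \<in> {n. x n \<noteq> 0}"
    then have "tail n \<noteq> {}" by (auto simp: x_def)
    then show "n \<in> {..<N}" using N by (fastforce simp: tail_def)
  qed
  then have "finite {n. x n \<noteq> 0}"
    by (rule finite_subset) simp
  then have x_fs: "x \<in> finite_support_seqs"
    by (simp add: finite_support_seqs_def binary_seqs_iff x_def)
  have "successive_diff x n = y n" for n
  proof -
    have fin: "finite (tail (Suc n))"
      using y by (auto simp: finite_support_seqs_def tail_def intro: finite_subset)
    have "tail n = (if y n \<noteq> 0 then insert n (tail (Suc n)) else tail (Suc n))"
      by (auto simp: tail_def Suc_le_eq order.order_iff_strict)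
    then have "card (tail n) = (if y n \<noteq> 0 then Suc (card (tail (Suc n))) else card (tail (Suc n)))"
      using fin by (simp add: tail_def)
    then show ?thesis
      using y binary_seqsD[of y n] by (auto simp: successive_diff_def x_def finite_support_seqs_def)
  qed
  then show "y \<in> successive_diff ` finite_support_seqs"
    using x_fs by (auto simp: fun_eq_iff intro: image_eqI[of _ _ x])
qed

lemma successive_diff_iso:
  "successive_diff \<in> iso (cantor_group\<lparr>carrier := finite_support_seqs\<rparr>) (cantor_group\<lparr>carrier := finite_support_seqs\<rparr>)"
proof -
  have "bij_betw successive_diff finite_support_seqs finite_support_seqs"
    using inj_on_successive_diff successive_diff_surj_on successive_diff_finite_support_seqs
    by (auto simp: bij_betw_def)
  then show ?thesis
    by (auto simp: iso_def hom_def cantor_group_def finite_support_seqs_def successive_diff_mult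
        bij_betw_def)
qed

lemma continuous_map_successive_diff: "continuous_map cantor_topology cantor_topology successive_diff"
proof -
  have "continuous_map cantor_topology euclideanreal (\<lambda>x. \<bar>x k - x (Suc k)\<bar>)" for k
    by (intro continuous_map_real_abs continuous_map_diff continuous_map_cantor_coordinate)
  then show ?thesis
    using successive_diff_binary_seqs
    by (simp add: continuous_map_into_cantor_topology successive_diff_def Pi_iff)
qed

lemma successive_diff_upto_indicator: "successive_diff (\<lambda>n. if n \<le> N then 1 else 0) = (\<lambda>n. if n = N then 1 else 0)"
  by (auto simp: successive_diff_def fun_eq_iff)

lemma not_open_map_successive_diff:
  "\<not> open_map (subtopology cantor_topology finite_support_seqs)
                (subtopology cantor_topology finite_support_seqs) successive_diff"
proof
  let ?S = "subtopology cantor_topology finite_support_seqs"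
  let ?U = "{x \<in> finite_support_seqs. x 0 = 0}"
  assume "open_map ?S ?S successive_diff"
  moreover have "openin ?S ?U"
  proof -
    have "openin cantor_topology {x \<in> binary_seqs. x 0 \<in> {..<1/2}}"
      using openin_continuous_map_preimage[OF continuous_map_cantor_coordinate, of "{..<1/2}" 0]
      by simp
    moreover have "x 0 = 0 \<longleftrightarrow> x 0 \<in> {..<1/2}" if "x \<in> binary_seqs" for x
      using binary_seqsD[OF that, of 0] by auto
    then have "?U = finite_support_seqs \<inter> {x \<in> binary_seqs. x 0 \<in> {..<1/2}}"
      by (auto simp: finite_support_seqs_def)
    ultimately show ?thesis by (auto simp: openin_subtopology)
  qed
  ultimately have "openin ?S (successive_diff ` ?U)" by (simp add: open_map_def)
  then obtain W where W: "openin cantor_topology W"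
    and U_eq: "successive_diff ` ?U = W \<inter> finite_support_seqs"
    by (auto simp: openin_subtopology)
  have "successive_diff (\<lambda>_. 0) = (\<lambda>_. 0)"
    by (simp add: successive_diff_def fun_eq_iff)
  then have "(\<lambda>_. 0) \<in> successive_diff ` ?U"
    using zero_in_finite_support_seqs by (auto intro!: image_eqI[of _ _ "\<lambda>_. 0"])
  then have "(\<lambda>_. 0) \<in> W" using U_eq by blast
  then obtain N where N: "\<And>y. y \<in> binary_seqs \<Longrightarrow> (\<And>n. n < N \<Longrightarrow> y n = 0) \<Longrightarrow> y \<in> W"
    using openin_cantor_topology_cylinder[OF W] by blast
  define e where "e n = (if n = N then 1 else 0 :: real)" for n
  define u where "u n = (if n \<le> N then 1 else 0 :: real)" for n
  have e: "e \<in> finite_support_seqs" and u: "u \<in> finite_support_seqs"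
    by (auto simp: e_def u_def finite_support_seqs_def binary_seqs_iff)
  have "e \<in> W" by (rule N) (auto simp: e_def binary_seqs_iff)
  then have "e \<in> successive_diff ` ?U" using U_eq e by blast
  then obtain x where x: "x \<in> ?U" and "successive_diff x = e" by blast
  moreover have "successive_diff u = e"
    unfolding u_def e_def by (rule successive_diff_upto_indicator)
  ultimately have "x = u"
    using inj_onD[OF inj_on_successive_diff] u by auto
  then show False using x by (simp add: u_def)
qed

theorem mainTheorem16:
  shows "\<exists>(K :: (nat \<Rightarrow> real) monoid) T.
           topological_group K T \<and> comm_group K \<and> compact_space T \<and> metrizable_space T \<and>
           (\<exists>H. subgroup H K \<and> countable H \<and> T closure_of H = topspace T \<and>
                \<not> g_reversible (K\<lparr>carrier := H\<rparr>) (subtopology T H))"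
proof (intro exI conjI)
  show "\<not> g_reversible (cantor_group\<lparr>carrier := finite_support_seqs\<rparr>)
                       (subtopology cantor_topology finite_support_seqs)"
    unfolding g_reversible_def
    using successive_diff_iso not_open_map_successive_diff continuous_map_successive_diff
      successive_diff_finite_support_seqs
    by (auto simp: continuous_map_in_subtopology continuous_map_from_subtopology)
qed (simp_all add: topological_group_cantor comm_group_cantor_group compact_space_cantor_topology
       metrizable_space_cantor_topology subgroup_finite_support_seqs countable_finite_support_seqs
       dense_finite_support_seqs)

end
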